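(* There is no function $g:\mathbb{N}\to\mathbb{N}$ such that $\operatorname{bcrk}(D)\le g(\operatorname{dbw}(D))$ for every digraph $D$.
   Context: A layout of a symmetric function $f:2^U\to\mathbb{Z}$ on a finite set $U$ is a pair $(T,\beta)$, $T$ a tree of maximum degree at most three, $\beta$ a bijection from leaves of $T$ onto $U$; the order of a tree edge is $f(\beta(Y))$ for $Y$ the leaves on one side; width is the maximum order (0 if none); the layout-$f$-width of $U$ is the minimum width. Directed branch-width: $\operatorname{dbw}(D)$ is the layout-$f_D$-width of $E(D)$ where $f_D(X)=|S^V_X\cup S^V_{E(D)\setminus X}|$ and $S^V_X=\{y: \exists x,z,\ \vec{xy}\in E(D)\setminus X,\ \vec{yz}\in X\}$. Bi-cut-rank-width: with $M$ the $\mathrm{GF}(2)$ adjacency matrix of $D$ ($M_{uv}=1$ iff $\vec{uv}\in E(D)$), $g_D(X)=\operatorname{rk}(M[V(D)\setminus X,X])+\operatorname{rk}(M[X,V(D)\setminus X])$, and $\operatorname{bcrk}(D)$ is the layout-$g_D$-width of $V(D)$. *)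

theory Defs
  imports Main
begin

text \<open>A digraph on vertex set V (natural-number vertices) with arc set E:
  finite, arcs between vertices of V, no loops; parallel arcs are not possible
  since E is a set of ordered pairs.\<close>

definition digraph :: "nat set \<Rightarrow> (nat \<times> nat) set \<Rightarrow> bool" where
  "digraph V E \<longleftrightarrow> finite V \<and> E \<subseteq> V \<times> V \<and> (\<forall>x. (x, x) \<notin> E)"

definition tree_adj :: "nat set set \<Rightarrow> nat \<Rightarrow> nat \<Rightarrow> bool" where
  "tree_adj Ed x y \<longleftrightarrow> {x, y} \<in> Ed"

definition is_tree :: "nat set \<Rightarrow> nat set set \<Rightarrow> bool" where
  "is_tree N Ed \<longleftrightarrow> finite N \<and> N \<noteq> {}
     \<and> (\<forall>e\<in>Ed. \<exists>x y. x \<noteq> y \<and> x \<in> N \<and> y \<in> N \<and> e = {x, y})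
     \<and> (\<forall>x\<in>N. \<forall>y\<in>N. (tree_adj Ed)\<^sup>*\<^sup>* x y)
     \<and> card Ed + 1 = card N"

definition tdeg :: "nat set set \<Rightarrow> nat \<Rightarrow> nat" where
  "tdeg Ed x = card {e \<in> Ed. x \<in> e}"

definition subcubic_tree :: "nat set \<Rightarrow> nat set set \<Rightarrow> bool" where
  "subcubic_tree N Ed \<longleftrightarrow> is_tree N Ed \<and> (\<forall>x\<in>N. tdeg Ed x \<le> 3)"

definition leaves :: "nat set \<Rightarrow> nat set set \<Rightarrow> nat set" where
  "leaves N Ed = {x \<in> N. tdeg Ed x \<le> 1}"

definition side :: "nat set \<Rightarrow> nat set set \<Rightarrow> nat \<Rightarrow> nat \<Rightarrow> nat set" where
  "side N Ed a b = {x \<in> N. (tree_adj (Ed - {{a, b}}))\<^sup>*\<^sup>* a x}"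

definition is_layout :: "nat set \<Rightarrow> nat set set \<Rightarrow> (nat \<Rightarrow> 'u) \<Rightarrow> 'u set \<Rightarrow> bool" where
  "is_layout N Ed \<beta> U \<longleftrightarrow> subcubic_tree N Ed \<and> bij_betw \<beta> (leaves N Ed) U"

text \<open>The order of the edge {a,b} is f of the image of the leaves on the a-side
  (for symmetric f this does not depend on the chosen side).\<close>

definition layout_width ::
  "('u set \<Rightarrow> nat) \<Rightarrow> nat set \<Rightarrow> nat set set \<Rightarrow> (nat \<Rightarrow> 'u) \<Rightarrow> nat" where
  "layout_width f N Ed \<beta> =
     Max (insert 0 {f (\<beta> ` (leaves N Ed \<inter> side N Ed a b)) | a b. {a, b} \<in> Ed})"

text \<open>Layout-f-width of U: minimum width over all layouts (0 if U has none,
  i.e. U is empty).\<close>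

definition layout_f_width :: "('u set \<Rightarrow> nat) \<Rightarrow> 'u set \<Rightarrow> nat" where
  "layout_f_width f U = Inf {layout_width f N Ed \<beta> | N Ed \<beta>. is_layout N Ed \<beta> U}"

definition SV :: "(nat \<times> nat) set \<Rightarrow> (nat \<times> nat) set \<Rightarrow> nat set" where
  "SV E X = {y. \<exists>x z. (x, y) \<in> E - X \<and> (y, z) \<in> X}"

definition fD :: "(nat \<times> nat) set \<Rightarrow> (nat \<times> nat) set \<Rightarrow> nat" where
  "fD E X = card (SV E X \<union> SV E (E - X))"

definition dbw :: "nat set \<Rightarrow> (nat \<times> nat) set \<Rightarrow> nat" where
  "dbw V E = layout_f_width (fD E) E"

text \<open>Rank over GF(2) of the submatrix M[R,C] of the adjacency matrix
  (M_uv = 1 iff (u,v) in E): the maximum size of a set of rows that is linearly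
  independent over GF(2), i.e. no nonempty subset of these rows sums to the zero
  vector over GF(2).\<close>

definition gf2_indep_rows :: "(nat \<times> nat) set \<Rightarrow> nat set \<Rightarrow> nat set \<Rightarrow> bool" where
  "gf2_indep_rows E S C \<longleftrightarrow>
     (\<forall>T \<subseteq> S. T \<noteq> {} \<longrightarrow> (\<exists>c\<in>C. odd (card {r \<in> T. (r, c) \<in> E})))"

definition gf2_rank :: "(nat \<times> nat) set \<Rightarrow> nat set \<Rightarrow> nat set \<Rightarrow> nat" where
  "gf2_rank E R C = Max {card S | S. S \<subseteq> R \<and> finite S \<and> gf2_indep_rows E S C}"

definition gD :: "nat set \<Rightarrow> (nat \<times> nat) set \<Rightarrow> nat set \<Rightarrow> nat" where
  "gD V E X = gf2_rank E (V - X) X + gf2_rank E X (V - X)"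

definition bcrk :: "nat set \<Rightarrow> (nat \<times> nat) set \<Rightarrow> nat" where
  "bcrk V E = layout_f_width (gD V E) V"

end

theory Submission
  imports Defs
begin

text \<open>Take m = 3k sources 0, ..., m - 1 and, for every ordered pair (i, j) of them, a sink
  with arcs from i and from j. No vertex is both a head and a tail, so every separation of the
  arc set has order 0 and the directed branch-width is 0. On the other hand, every layout of
  the vertex set has a tree edge splitting the sources with at least k on each side, and the
  sinks of suitable split pairs are private columns for k rows of one of the two cut
  matrices, which are therefore independent over GF(2).\<close>

section \<open>Connectivity in sets of undirected edges\<close>

abbreviation tree_reach :: "nat set set \<Rightarrow> nat \<Rightarrow> nat \<Rightarrow> bool" where
  "tree_reach Ed \<equiv> (tree_adj Ed)\<^sup>*\<^sup>*"

lemma tree_adj_commute: "tree_adj Ed x y \<longleftrightarrow> tree_adj Ed y x"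
  by (simp add: tree_adj_def insert_commute)

lemma tree_reach_sym: "tree_reach Ed x y \<Longrightarrow> tree_reach Ed y x"
proof (induction rule: rtranclp_induct)
  case (step y z)
  then show ?case by (metis tree_adj_commute converse_rtranclp_into_rtranclp)
qed simp

lemma tree_reach_mono: "F \<subseteq> Ed \<Longrightarrow> tree_reach F x y \<Longrightarrow> tree_reach Ed x y"
  by (erule rtranclp_mono[THEN predicate2D, rotated]) (auto simp: tree_adj_def)

lemma tree_reach_subset: "{y. tree_reach Ed x y} \<subseteq> insert x (\<Union>Ed)"
proof
  fix y assume "y \<in> {y. tree_reach Ed x y}"
  then have "tree_reach Ed x y" by simp
  then show "y \<in> insert x (\<Union>Ed)"
    by (induction rule: rtranclp_induct) (auto simp: tree_adj_def)
qed

lemma tree_reach_insert_edge: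
  assumes "tree_reach (insert {u, v} F) x y"
  shows "tree_reach F x y \<or> tree_reach F x u \<and> tree_reach F v y \<or> tree_reach F x v \<and> tree_reach F u y"
  using assms
proof (induction rule: rtranclp_induct)
  case (step y z)
  show ?case
  proof (cases "{y, z} = {u, v}")
    case True
    then show ?thesis using step.IH by (auto simp: doubleton_eq_iff)
  next
    case False
    then have "tree_adj F y z" using step.hyps(2) by (simp add: tree_adj_def)
    then show ?thesis using step.IH by (meson rtranclp.rtrancl_into_rtrancl)
  qed
qed simp

lemma tree_reach_insert_cross:
  assumes xa: "tree_reach F x a" and xb: "\<not> tree_reach F x b"
  shows "{y. tree_reach (insert {a, b} F) x y} = {y. tree_reach F x y} \<union> {y. tree_reach F b y}"
    and "{y. tree_reach F x y} \<inter> {y. tree_reach F b y} = {}"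
proof -
  let ?F' = "insert {a, b} F"
  have "tree_reach ?F' x a" using tree_reach_mono[OF subset_insertI xa] .
  moreover have "tree_adj ?F' a b" by (simp add: tree_adj_def)
  ultimately have xb': "tree_reach ?F' x b" by (simp add: rtranclp.rtrancl_into_rtrancl)
  have "tree_reach ?F' x y" if "tree_reach F b y" for y
    using rtranclp_trans[OF xb' tree_reach_mono[OF subset_insertI that]] .
  then show "{y. tree_reach ?F' x y} = {y. tree_reach F x y} \<union> {y. tree_reach F b y}"
    using tree_reach_insert_edge[of a b F x] tree_reach_mono[OF subset_insertI] xb by blast
  show "{y. tree_reach F x y} \<inter> {y. tree_reach F b y} = {}"
    using xb tree_reach_sym rtranclp_trans[of "tree_adj F" x _ b] by blast
qed

lemma tree_reach_insert_inside:
  assumes "tree_reach F x u \<longleftrightarrow> tree_reach F x v"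
  shows "{y. tree_reach (insert {u, v} F) x y} = {y. tree_reach F x y}"
proof -
  have "tree_reach F x y" if "tree_reach (insert {u, v} F) x y" for y
    using tree_reach_insert_edge[OF that] assms
      rtranclp_trans[of "tree_adj F" x u y] rtranclp_trans[of "tree_adj F" x v y]
    by blast
  then show ?thesis using tree_reach_mono[OF subset_insertI] by blast
qed

lemma card_tree_reach_le:
  assumes "finite F" "\<forall>f\<in>F. \<exists>u v. u \<noteq> v \<and> f = {u, v}"
  shows "card {y. tree_reach F x y} \<le> card {f\<in>F. f \<subseteq> {y. tree_reach F x y}} + 1"
  using assms
proof (induction F arbitrary: x rule: finite_induct)
  case empty
  have "tree_reach {} x y \<Longrightarrow> y = x" for y
    by (induction rule: rtranclp_induct) (auto simp: tree_adj_def)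
  then have "{y. tree_reach {} x y} = {x}" by auto
  then show ?case by simp
next
  case (insert e F)
  let ?R = "\<lambda>w. {y. tree_reach F w y}" and ?R' = "{y. tree_reach (insert e F) x y}"
  let ?E = "\<lambda>w. {f\<in>F. f \<subseteq> ?R w}" and ?E' = "{f\<in>insert e F. f \<subseteq> ?R'}"
  have "finite (\<Union>F)" using insert.hyps(1) insert.prems by auto
  then have fin: "finite (?R w)" for w using finite_subset[OF tree_reach_subset] by blast
  have IH: "card (?R w) \<le> card (?E w) + 1" for w
    using insert.IH insert.prems by simp
  have fin_E': "finite ?E'" using insert.hyps(1) by simp
  obtain u v where e: "e = {u, v}" using insert.prems by auto
  show ?case
  proof (cases "tree_reach F x u \<longleftrightarrow> tree_reach F x v")
    case True
    then have "?R' = ?R x" unfolding e by (rule tree_reach_insert_inside)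
    then have "card (?E x) \<le> card ?E'" by (intro card_mono[OF fin_E']) auto
    then show ?thesis using IH[of x] \<open>?R' = ?R x\<close> by simp
  next
    case False
    then obtain a b where ab: "e = {a, b}" "tree_reach F x a" "\<not> tree_reach F x b"
      using e by (metis insert_commute)
    note R'_eq = tree_reach_insert_cross(1)[OF ab(2,3), folded ab(1)]
    note disj = tree_reach_insert_cross(2)[OF ab(2,3)]
    have "e \<subseteq> ?R'" using ab R'_eq by auto
    then have "insert e (?E x \<union> ?E b) \<subseteq> ?E'" using R'_eq by auto
    then have "card (insert e (?E x \<union> ?E b)) \<le> card ?E'" by (rule card_mono[OF fin_E'])
    moreover have "card (insert e (?E x \<union> ?E b)) = card (?E x) + card (?E b) + 1"
    proof -
      have "\<forall>f\<in>F. f \<noteq> {}" using insert.prems by fastforce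
      then have "?E x \<inter> ?E b = {}" using disj by blast
      then show ?thesis using insert.hyps by (simp add: card_Un_disjoint)
    qed
    moreover have "card ?R' = card (?R x) + card (?R b)"
      unfolding R'_eq by (rule card_Un_disjoint[OF fin fin disj])
    ultimately show ?thesis using IH[of x] IH[of b] by linarith
  qed
qed

section \<open>The two sides of a tree edge\<close>

lemma is_tree_edgeE:
  assumes "is_tree N Ed" "e \<in> Ed"
  obtains x y where "x \<noteq> y" "x \<in> N" "y \<in> N" "e = {x, y}"
proof -
  have "\<forall>e\<in>Ed. \<exists>x y. x \<noteq> y \<and> x \<in> N \<and> y \<in> N \<and> e = {x, y}"
    using assms(1) by (simp add: is_tree_def)
  then show thesis using that assms(2) by blast
qed

lemma is_tree_edgeD:
  assumes "is_tree N Ed" "{a, b} \<in> Ed"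
  shows "a \<in> N" "b \<in> N" "a \<noteq> b"
  using is_tree_edgeE[OF assms] by (metis doubleton_eq_iff)+

lemma is_tree_edge_subset: "is_tree N Ed \<Longrightarrow> e \<in> Ed \<Longrightarrow> e \<subseteq> N"
  by (erule is_tree_edgeE) auto

lemma is_tree_finite_edges:
  assumes "is_tree N Ed"
  shows "finite Ed"
proof -
  have "Ed \<subseteq> Pow N" using is_tree_edge_subset[OF assms] by blast
  moreover have "finite N" using assms by (simp add: is_tree_def)
  ultimately show ?thesis by (simp add: finite_subset)
qed

text \<open>Otherwise the |N| - 2 edges of Ed - {{a, b}} would still connect all of N.\<close>

lemma tree_edge_is_bridge:
  assumes T: "is_tree N Ed" and ab: "{a, b} \<in> Ed"
  shows "\<not> tree_reach (Ed - {{a, b}}) a b"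
proof
  let ?F = "Ed - {{a, b}}"
  let ?R = "{y. tree_reach ?F a y}"
  assume ab_reach: "tree_reach ?F a b"
  have "N \<subseteq> ?R"
  proof
    fix y assume "y \<in> N"
    then have "tree_reach Ed a y" using T is_tree_edgeD(1)[OF T ab] by (simp add: is_tree_def)
    then show "y \<in> ?R"
    proof (induction rule: rtranclp_induct)
      case (step y z)
      show ?case
      proof (cases "{y, z} = {a, b}")
        case True
        then have "z = a \<or> z = b" by (auto simp: doubleton_eq_iff)
        then show ?thesis using ab_reach by auto
      next
        case False
        then have "tree_adj ?F y z" using step.hyps(2) by (simp add: tree_adj_def)
        then show ?thesis using step.IH by (simp add: rtranclp.rtrancl_into_rtrancl)
      qed
    qed simp
  qed
  have fin_F: "finite ?F" using is_tree_finite_edges[OF T] by simp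
  have edges: "\<forall>f\<in>?F. \<exists>u v. u \<noteq> v \<and> f = {u, v}"
    using is_tree_edgeE[OF T] by (metis DiffD1)
  have "?R \<subseteq> insert a (\<Union>?F)" by (rule tree_reach_subset)
  also have "\<dots> \<subseteq> N" using is_tree_edge_subset[OF T] is_tree_edgeD(1)[OF T ab] by blast
  finally have "finite ?R" using T finite_subset by (auto simp: is_tree_def)
  then have "card N \<le> card ?R" using \<open>N \<subseteq> ?R\<close> by (rule card_mono)
  moreover have "card ?R \<le> card {f\<in>?F. f \<subseteq> ?R} + 1" by (rule card_tree_reach_le[OF fin_F edges])
  moreover have "card {f\<in>?F. f \<subseteq> ?R} \<le> card ?F" by (rule card_mono[OF fin_F]) blast
  moreover have "card ?F < card Ed" by (rule card_Diff1_less[OF is_tree_finite_edges[OF T] ab])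
  moreover have "card Ed + 1 = card N" using T by (simp add: is_tree_def)
  ultimately show False by linarith
qed

lemma side_subset: "side N Ed a b \<subseteq> N"
  by (auto simp: side_def)

lemma mem_side_self:
  assumes "is_tree N Ed" "{a, b} \<in> Ed" shows "a \<in> side N Ed a b"
  using is_tree_edgeD[OF assms] by (simp add: side_def)

lemma side_Un_side:
  assumes T: "is_tree N Ed" and ab: "{a, b} \<in> Ed"
  shows "side N Ed a b \<union> side N Ed b a = N"
proof
  let ?F = "Ed - {{a, b}}"
  show "N \<subseteq> side N Ed a b \<union> side N Ed b a"
  proof
    fix x assume x: "x \<in> N"
    then have "tree_reach Ed a x" using T is_tree_edgeD(1)[OF T ab] by (simp add: is_tree_def)
    then have "tree_reach ?F a x \<or> tree_reach ?F b x"
    proof (induction rule: rtranclp_induct)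
      case (step y z)
      then show ?case
        by (cases "{y, z} = {a, b}")
          (auto simp: tree_adj_def doubleton_eq_iff intro: rtranclp.rtrancl_into_rtrancl)
    qed simp
    then show "x \<in> side N Ed a b \<union> side N Ed b a"
      using x by (auto simp: side_def insert_commute)
  qed
qed (simp add: side_subset)

lemma rtranclp_leave_once:
  assumes "R\<^sup>*\<^sup>* a x"
  shows "x = a \<or> (\<exists>c. R a c \<and> (\<lambda>u v. R u v \<and> u \<noteq> a \<and> v \<noteq> a)\<^sup>*\<^sup>* c x)"
  using assms
proof (induction rule: rtranclp_induct)
  case (step y z)
  show ?case
  proof (cases "z = a \<or> y = a")
    case False
    then show ?thesis using step by (auto intro: rtranclp.rtrancl_into_rtrancl)
  qed (use step.hyps(2) in auto)
qed simp

definition tree_children :: "nat set set \<Rightarrow> nat \<Rightarrow> nat \<Rightarrow> nat set" where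
  "tree_children Ed a b = {c. {a, c} \<in> Ed \<and> c \<noteq> b}"

lemma side_subset_children:
  assumes T: "is_tree N Ed" and ab: "{a, b} \<in> Ed"
  shows "side N Ed a b \<subseteq> insert a (\<Union>c\<in>tree_children Ed a b. side N Ed c a)"
proof
  let ?F = "Ed - {{a, b}}"
  fix x assume x: "x \<in> side N Ed a b"
  then have "tree_reach ?F a x" "x \<in> N" by (auto simp: side_def)
  show "x \<in> insert a (\<Union>c\<in>tree_children Ed a b. side N Ed c a)"
  proof (cases "x = a")
    case False
    then obtain c where c: "tree_adj ?F a c"
      "(\<lambda>u v. tree_adj ?F u v \<and> u \<noteq> a \<and> v \<noteq> a)\<^sup>*\<^sup>* c x"
      using rtranclp_leave_once[OF \<open>tree_reach ?F a x\<close>] by blast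
    have "(\<lambda>u v. tree_adj ?F u v \<and> u \<noteq> a \<and> v \<noteq> a) \<le> tree_adj (Ed - {{c, a}})"
      by (auto simp: tree_adj_def doubleton_eq_iff)
    then have "tree_reach (Ed - {{c, a}}) c x" using c(2) by (rule rtranclp_mono[THEN predicate2D])
    moreover have "c \<in> tree_children Ed a b" using c(1) by (auto simp: tree_adj_def tree_children_def)
    ultimately show ?thesis using \<open>x \<in> N\<close> by (auto simp: side_def)
  qed simp
qed

lemma side_child_psubset:
  assumes T: "is_tree N Ed" and ab: "{a, b} \<in> Ed" and c: "c \<in> tree_children Ed a b"
  shows "side N Ed c a \<subset> side N Ed a b"
proof -
  let ?F = "Ed - {{a, b}}" and ?G = "Ed - {{c, a}}"
  have ca: "{c, a} \<in> Ed" and cb: "c \<noteq> b" using c by (auto simp: tree_children_def insert_commute)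
  have not_ca: "\<not> tree_reach ?G c a" by (rule tree_edge_is_bridge[OF T ca])
  have "tree_reach ?F a y" if "tree_reach ?G c y" for y
    using that
  proof (induction rule: rtranclp_induct)
    case base
    have "tree_adj ?F a c" using ca cb by (auto simp: tree_adj_def doubleton_eq_iff insert_commute)
    then show ?case by simp
  next
    case (step y z)
    have "y \<noteq> a" "z \<noteq> a" using step.hyps not_ca by (auto intro: rtranclp.rtrancl_into_rtrancl)
    then have "tree_adj ?F y z" using step.hyps(2) by (auto simp: tree_adj_def doubleton_eq_iff)
    then show ?case using step.IH by (simp add: rtranclp.rtrancl_into_rtrancl)
  qed
  then have "side N Ed c a \<subseteq> side N Ed a b" by (auto simp: side_def)
  moreover have "a \<in> side N Ed a b" "a \<notin> side N Ed c a"
    using mem_side_self[OF T ab] not_ca by (auto simp: side_def)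
  ultimately show ?thesis by blast
qed

lemma card_children_less_tdeg:
  assumes T: "is_tree N Ed" and ab: "{a, b} \<in> Ed"
  shows "finite (tree_children Ed a b)" "card (tree_children Ed a b) < tdeg Ed a"
proof -
  let ?C = "tree_children Ed a b" and ?D = "{e \<in> Ed. a \<in> e}"
  have fin_D: "finite ?D" using is_tree_finite_edges[OF T] by simp
  have inj: "inj_on (\<lambda>c. {a, c}) ?C"
    by (rule inj_onI) (auto simp: tree_children_def doubleton_eq_iff dest: is_tree_edgeD(3)[OF T])
  have img: "(\<lambda>c. {a, c}) ` ?C \<subseteq> ?D - {{a, b}}"
    by (auto simp: tree_children_def doubleton_eq_iff)
  have "finite ((\<lambda>c. {a, c}) ` ?C)" using finite_subset[OF img] fin_D by blast
  then show "finite ?C" using finite_image_iff[OF inj] by blast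
  have "card ?C = card ((\<lambda>c. {a, c}) ` ?C)" using card_image[OF inj] by simp
  also have "\<dots> \<le> card (?D - {{a, b}})" using img fin_D by (simp add: card_mono)
  also have "\<dots> < card ?D" using fin_D ab by (intro psubset_card_mono) auto
  finally show "card ?C < tdeg Ed a" by (simp add: tdeg_def)
qed

lemma card_leaves_side_le:
  assumes ST: "subcubic_tree N Ed" and W: "W \<subseteq> leaves N Ed" and ab: "{a, b} \<in> Ed"
    and "1 \<le> k" and small: "\<forall>c\<in>tree_children Ed a b. card (W \<inter> side N Ed c a) < k"
  shows "card (W \<inter> side N Ed a b) \<le> 2 * k"
proof -
  let ?C = "tree_children Ed a b"
  have T: "is_tree N Ed" using ST by (simp add: subcubic_tree_def)
  have "finite N" using T by (simp add: is_tree_def)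
  then have fin_W: "finite W" using W finite_subset[of W N] by (auto simp: leaves_def)
  have fin_C: "finite ?C" and C_less: "card ?C < tdeg Ed a"
    using card_children_less_tdeg[OF T ab] by auto
  have "W \<inter> side N Ed a b \<subseteq> (W \<inter> {a}) \<union> (\<Union>c\<in>?C. W \<inter> side N Ed c a)"
    using side_subset_children[OF T ab] by blast
  then have "card (W \<inter> side N Ed a b) \<le> card ((W \<inter> {a}) \<union> (\<Union>c\<in>?C. W \<inter> side N Ed c a))"
    using fin_W fin_C by (intro card_mono) auto
  also have "\<dots> \<le> card (W \<inter> {a}) + (\<Sum>c\<in>?C. card (W \<inter> side N Ed c a))"
    using card_Un_le[of "W \<inter> {a}"] card_UN_le[OF fin_C, of "\<lambda>c. W \<inter> side N Ed c a"]
    by (meson add_left_mono le_trans)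
  also have "\<dots> \<le> card (W \<inter> {a}) + card ?C * k"
    using sum_bounded_above[of ?C _ k] small by (simp add: less_imp_le)
  finally have bound: "card (W \<inter> side N Ed a b) \<le> card (W \<inter> {a}) + card ?C * k" .
  show ?thesis
  proof (cases "a \<in> W")
    case True
    then have "card ?C = 0" using C_less W by (auto simp: leaves_def)
    then show ?thesis using bound \<open>1 \<le> k\<close> card_mono[of "{a}" "W \<inter> {a}"] by simp
  next
    case False
    have "a \<in> N" using is_tree_edgeD[OF T ab] by simp
    then have "card ?C \<le> 2" using C_less ST by (fastforce simp: subcubic_tree_def)
    then have "card ?C * k \<le> 2 * k" by (rule mult_le_mono1)
    moreover have "card (W \<inter> {a}) = 0" using False by simp
    ultimately show ?thesis using bound by linarith
  qed
qed

text \<open>Among the edges with at least k leaves of W on the a-side, take one whose a-side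
  is smallest; then each of the at most two further subtrees hanging at a carries fewer
  than k leaves of W, so the other side carries at least 3k - 2k of them.\<close>

lemma exists_balanced_tree_edge:
  assumes ST: "subcubic_tree N Ed" and W: "W \<subseteq> leaves N Ed" and "1 \<le> k" and km: "3 * k \<le> card W"
  shows "\<exists>a b. {a, b} \<in> Ed \<and> k \<le> card (W \<inter> side N Ed a b) \<and> k \<le> card (W - side N Ed a b)"
proof -
  have T: "is_tree N Ed" using ST by (simp add: subcubic_tree_def)
  have fin_N: "finite N" using T by (simp add: is_tree_def)
  have fin_W: "finite W" using W fin_N finite_subset[of W N] by (auto simp: leaves_def)
  let ?P = "\<lambda>(a, b). {a, b} \<in> Ed \<and> k \<le> card (W \<inter> side N Ed a b)"
  have "Ed \<noteq> {}"
  proof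
    assume "Ed = {}"
    then have "card N = 1" using T by (simp add: is_tree_def)
    moreover have "card W \<le> card N" using W fin_N by (intro card_mono) (auto simp: leaves_def)
    ultimately show False using \<open>1 \<le> k\<close> km by simp
  qed
  then obtain a0 b0 where ab0: "{a0, b0} \<in> Ed" by (metis ex_in_conv is_tree_edgeE[OF T])
  have "W \<subseteq> (W \<inter> side N Ed a0 b0) \<union> (W \<inter> side N Ed b0 a0)"
    using side_Un_side[OF T ab0] W by (auto simp: leaves_def)
  then have "card W \<le> card (W \<inter> side N Ed a0 b0) + card (W \<inter> side N Ed b0 a0)"
    using fin_W by (meson card_Un_le card_mono finite_Int finite_UnI le_trans)
  then have "?P (a0, b0) \<or> ?P (b0, a0)" using ab0 km by (auto simp: insert_commute)
  then obtain a b where min: "?P (a, b)"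
    "\<And>a' b'. ?P (a', b') \<Longrightarrow> card (side N Ed a b) \<le> card (side N Ed a' b')"
    using ex_has_least_nat[of ?P _ "\<lambda>(a, b). card (side N Ed a b)"] by fastforce
  have ab: "{a, b} \<in> Ed" using min(1) by simp
  have "card (W \<inter> side N Ed c a) < k" if c: "c \<in> tree_children Ed a b" for c
  proof (rule ccontr)
    assume "\<not> ?thesis"
    then have "?P (c, a)" using c by (auto simp: tree_children_def insert_commute)
    then have "card (side N Ed a b) \<le> card (side N Ed c a)" by (rule min(2))
    moreover have "card (side N Ed c a) < card (side N Ed a b)"
      using side_child_psubset[OF T ab c] finite_subset[OF side_subset fin_N]
      by (rule psubset_card_mono[rotated])
    ultimately show False by simp
  qed
  then have "card (W \<inter> side N Ed a b) \<le> 2 * k" by (intro card_leaves_side_le[OF ST W ab \<open>1 \<le> k\<close>]) blast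
  moreover have "card (W - side N Ed a b) = card W - card (W \<inter> side N Ed a b)"
    using fin_W by (simp add: card_Diff_subset_Int)
  ultimately have "k \<le> card (W - side N Ed a b)" using km by linarith
  then show ?thesis using ab min(1) by auto
qed

section \<open>Layouts\<close>

lemma is_tree_add_leaf:
  assumes T: "is_tree N Ed" and l: "l \<in> N" and n: "n \<notin> N"
  shows "is_tree (insert n N) (insert {l, n} Ed)"
proof -
  let ?N = "insert n N" and ?Ed = "insert {l, n} Ed"
  have new_edge: "{l, n} \<notin> Ed" using is_tree_edge_subset[OF T] n by blast
  have "tree_reach ?Ed l y" if "y \<in> ?N" for y
  proof (cases "y = n")
    case True
    then have "tree_adj ?Ed l y" by (simp add: tree_adj_def)
    then show ?thesis by simp
  next
    case False
    then have "tree_reach Ed l y" using T l that by (simp add: is_tree_def)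
    then show ?thesis by (rule tree_reach_mono[rotated]) blast
  qed
  then have "\<forall>x\<in>?N. \<forall>y\<in>?N. tree_reach ?Ed x y"
    using tree_reach_sym by (meson rtranclp_trans)
  moreover have "card ?Ed + 1 = card ?N"
    using T n new_edge is_tree_finite_edges[OF T] by (simp add: is_tree_def)
  moreover have "l \<noteq> n" using l n by blast
  ultimately show ?thesis using T l unfolding is_tree_def by blast
qed

lemma tdeg_add_leaf:
  assumes T: "is_tree N Ed" and n: "n \<notin> N"
  shows "tdeg (insert {l, n} Ed) y = tdeg Ed y + (if y = l \<or> y = n then 1 else 0)"
proof -
  have fin: "finite Ed" by (rule is_tree_finite_edges[OF T])
  have new_edge: "{l, n} \<notin> Ed" and no_n: "{e \<in> Ed. n \<in> e} = {}"
    using is_tree_edge_subset[OF T] n by blast+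
  show ?thesis
  proof (cases "y = l \<or> y = n")
    case True
    then have "{e \<in> insert {l, n} Ed. y \<in> e} = insert {l, n} {e \<in> Ed. y \<in> e}" by auto
    then show ?thesis using True fin new_edge by (simp add: tdeg_def)
  next
    case False
    then have "{e \<in> insert {l, n} Ed. y \<in> e} = {e \<in> Ed. y \<in> e}" by auto
    then show ?thesis using False by (simp add: tdeg_def)
  qed
qed

lemma layout_singleton: "is_layout {0} {} (\<lambda>_. u) {u}"
proof -
  have "tdeg {} x = 0" for x by (simp add: tdeg_def)
  then have "leaves {0} {} = {0}" by (simp add: leaves_def)
  then show ?thesis by (simp add: is_layout_def subcubic_tree_def is_tree_def tdeg_def)
qed

lemma bij_betw_relabel_leaf:
  assumes bij: "bij_betw \<beta> L U" and l: "l \<in> L" and x: "x \<notin> U"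
    and n1: "n1 \<notin> L" and n2: "n2 \<notin> insert n1 L"
  shows "bij_betw (\<beta>(n1 := \<beta> l, n2 := x)) ((L - {l}) \<union> {n1} \<union> {n2}) (insert x U)"
proof -
  let ?\<beta> = "\<beta>(n1 := \<beta> l, n2 := x)"
  have "bij_betw \<beta> (L - {l}) (U - {\<beta> l})"
    using bij l by (intro bij_betw_DiffI) (auto simp: bij_betw_def)
  moreover have "?\<beta> y = \<beta> y" if "y \<in> L - {l}" for y using that n1 n2 by auto
  ultimately have "bij_betw ?\<beta> (L - {l}) (U - {\<beta> l})" using bij_betw_cong by blast
  then have "bij_betw ?\<beta> ((L - {l}) \<union> {n1}) (U - {\<beta> l} \<union> {?\<beta> n1})"
    using n1 n2 by (intro notIn_Un_bij_betw) auto
  moreover have "U - {\<beta> l} \<union> {?\<beta> n1} = U" using bij l n2 by (auto simp: bij_betw_def)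
  ultimately have "bij_betw ?\<beta> ((L - {l}) \<union> {n1}) U" by simp
  then have "bij_betw ?\<beta> ((L - {l}) \<union> {n1} \<union> {n2}) (U \<union> {?\<beta> n2})"
    using n2 x by (intro notIn_Un_bij_betw) auto
  then show ?thesis by simp
qed

lemma layout_insert:
  assumes lay: "is_layout N Ed \<beta> U" and x: "x \<notin> U" and "U \<noteq> {}"
  shows "\<exists>N' Ed' \<beta>'. is_layout N' Ed' \<beta>' (insert x U)"
proof -
  have T: "is_tree N Ed" and deg: "\<forall>y\<in>N. tdeg Ed y \<le> 3" and bij: "bij_betw \<beta> (leaves N Ed) U"
    using lay by (auto simp: is_layout_def subcubic_tree_def)
  let ?L = "leaves N Ed"
  obtain l where lL: "l \<in> ?L" using bij \<open>U \<noteq> {}\<close> by (auto simp: bij_betw_def)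
  have l: "l \<in> N" "tdeg Ed l \<le> 1" using lL by (auto simp: leaves_def)
  have fin_N: "finite N" using T by (simp add: is_tree_def)
  define n1 where "n1 = Suc (Max N)"
  define n2 where "n2 = Suc n1"
  have n1: "n1 \<notin> N" and n2: "n2 \<notin> insert n1 N"
    using Max_ge[OF fin_N] by (fastforce simp: n1_def n2_def)+
  define N' where "N' = insert n2 (insert n1 N)"
  define Ed' where "Ed' = insert {l, n2} (insert {l, n1} Ed)"
  define \<beta>' where "\<beta>' = \<beta>(n1 := \<beta> l, n2 := x)"
  have T1: "is_tree (insert n1 N) (insert {l, n1} Ed)" by (rule is_tree_add_leaf[OF T l(1) n1])
  have T': "is_tree N' Ed'" unfolding N'_def Ed'_def by (rule is_tree_add_leaf[OF T1 _ n2]) (use l in simp)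
  have tdeg': "tdeg Ed' y = tdeg Ed y + (if y = l then 2 else if y = n1 \<or> y = n2 then 1 else 0)"
    for y using tdeg_add_leaf[OF T1 n2, of l y] tdeg_add_leaf[OF T n1, of l y] n1 n2 l(1)
    by (auto simp: Ed'_def)
  have no_new: "{e \<in> Ed. n1 \<in> e} = {}" "{e \<in> Ed. n2 \<in> e} = {}"
    using is_tree_edge_subset[OF T] n1 n2 by blast+
  have tdeg_new: "tdeg Ed n1 = 0" "tdeg Ed n2 = 0" unfolding tdeg_def no_new by simp_all
  have "\<forall>y\<in>N'. tdeg Ed' y \<le> 3"
    using deg l tdeg_new by (auto simp: N'_def tdeg')
  then have "subcubic_tree N' Ed'" using T' by (simp add: subcubic_tree_def)
  moreover have "leaves N' Ed' = (?L - {l}) \<union> {n1} \<union> {n2}"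
    using l tdeg_new n1 n2 by (auto simp: leaves_def N'_def tdeg')
  moreover have "bij_betw \<beta>' ((?L - {l}) \<union> {n1} \<union> {n2}) (insert x U)"
    unfolding \<beta>'_def using bij lL x n1 n2 l(1) by (intro bij_betw_relabel_leaf) (auto simp: leaves_def)
  ultimately have "is_layout N' Ed' \<beta>' (insert x U)" by (simp add: is_layout_def)
  then show ?thesis by blast
qed

lemma layout_exists:
  assumes "finite U" "U \<noteq> {}"
  shows "\<exists>N Ed (\<beta> :: nat \<Rightarrow> 'u). is_layout N Ed \<beta> U"
  using assms
proof (induction U rule: finite_ne_induct)
  case (singleton u)
  show ?case by (intro exI) (rule layout_singleton)
next
  case (insert x U)
  then obtain N Ed \<beta> where "is_layout N Ed (\<beta> :: nat \<Rightarrow> 'u) U" by blast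
  then show ?case by (rule layout_insert) (use insert.hyps in auto)
qed

lemma layout_width_ge_order:
  assumes lay: "is_layout N Ed \<beta> U" and ab: "{a, b} \<in> Ed"
  shows "f (\<beta> ` (leaves N Ed \<inter> side N Ed a b)) \<le> layout_width f N Ed \<beta>"
proof -
  have T: "is_tree N Ed" using lay by (simp add: is_layout_def subcubic_tree_def)
  let ?ord = "\<lambda>(a, b). f (\<beta> ` (leaves N Ed \<inter> side N Ed a b))"
  let ?orders = "{f (\<beta> ` (leaves N Ed \<inter> side N Ed a b)) | a b. {a, b} \<in> Ed}"
  have "?orders \<subseteq> ?ord ` (N \<times> N)"
  proof
    fix w assume "w \<in> ?orders"
    then obtain a' b' where "{a', b'} \<in> Ed" "w = ?ord (a', b')" by auto
    then show "w \<in> ?ord ` (N \<times> N)" using is_tree_edgeD[OF T] by blast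
  qed
  moreover have "finite (?ord ` (N \<times> N))" using T by (simp add: is_tree_def)
  ultimately have "finite (insert 0 ?orders)" using finite_subset by blast
  moreover have "f (\<beta> ` (leaves N Ed \<inter> side N Ed a b)) \<in> insert 0 ?orders" using ab by blast
  ultimately show ?thesis unfolding layout_width_def by (rule Max_ge)
qed

lemma layout_width_eq_0:
  assumes "is_layout N Ed \<beta> U" and "\<forall>X\<subseteq>U. f X = 0"
  shows "layout_width f N Ed \<beta> = 0"
proof -
  let ?orders = "{f (\<beta> ` (leaves N Ed \<inter> side N Ed a b)) | a b. {a, b} \<in> Ed}"
  have img: "\<beta> ` leaves N Ed = U" using assms(1) unfolding is_layout_def bij_betw_def by blast
  have "?orders \<subseteq> {0}"
  proof
    fix w assume "w \<in> ?orders"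
    then obtain a b where "w = f (\<beta> ` (leaves N Ed \<inter> side N Ed a b))" by blast
    moreover have "\<beta> ` (leaves N Ed \<inter> side N Ed a b) \<subseteq> U" using img by blast
    ultimately show "w \<in> {0}" using assms(2) by simp
  qed
  then have "insert 0 ?orders = {0}" by blast
  then show ?thesis unfolding layout_width_def by (simp only: Max_singleton)
qed

lemma layout_f_width_ge:
  assumes "finite U" "U \<noteq> {}"
    and "\<And>N Ed (\<beta> :: nat \<Rightarrow> 'u). is_layout N Ed \<beta> U \<Longrightarrow> k \<le> layout_width f N Ed \<beta>"
  shows "k \<le> layout_f_width f (U :: 'u set)"
proof -
  obtain N Ed and \<beta> :: "nat \<Rightarrow> 'u" where "is_layout N Ed \<beta> U"
    using layout_exists[OF assms(1,2)] by blast
  then have "{layout_width f N Ed \<beta> | N Ed \<beta>. is_layout N Ed \<beta> U} \<noteq> {}" by blast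
  then show ?thesis unfolding layout_f_width_def by (rule cInf_greatest) (use assms(3) in blast)
qed

lemma layout_f_width_eq_0:
  assumes "finite U" "U \<noteq> {}" and "\<forall>X\<subseteq>U. f X = 0"
  shows "layout_f_width f (U :: 'u set) = 0"
proof -
  let ?widths = "{layout_width f N Ed \<beta> | N Ed (\<beta> :: nat \<Rightarrow> 'u). is_layout N Ed \<beta> U}"
  obtain N Ed and \<beta> :: "nat \<Rightarrow> 'u" where lay: "is_layout N Ed \<beta> U"
    using layout_exists[OF assms(1,2)] by blast
  then have "layout_width f N Ed \<beta> \<in> ?widths" by blast
  then have "0 \<in> ?widths" by (simp only: layout_width_eq_0[OF lay assms(3)])
  moreover have "?widths \<subseteq> {0}"
  proof
    fix w assume "w \<in> ?widths"
    then obtain N' Ed' and \<beta>' :: "nat \<Rightarrow> 'u" where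
      "w = layout_width f N' Ed' \<beta>'" "is_layout N' Ed' \<beta>' U" by blast
    then show "w \<in> {0}" using layout_width_eq_0[OF _ assms(3)] by simp
  qed
  ultimately have "?widths = {0}" by blast
  then show ?thesis unfolding layout_f_width_def by (simp only: cInf_singleton)
qed

lemma layout_f_width_ge_if_balanced:
  assumes fin: "finite U" and W: "W \<subseteq> U" and "1 \<le> k" and km: "3 * k \<le> card W"
    and order: "\<And>X. X \<subseteq> U \<Longrightarrow> k \<le> card (W \<inter> X) \<Longrightarrow> k \<le> card (W - X) \<Longrightarrow> k \<le> f X"
  shows "k \<le> layout_f_width f U"
proof (rule layout_f_width_ge[OF fin])
  show "U \<noteq> {}" using km \<open>1 \<le> k\<close> W by auto
next
  fix N Ed and \<beta> :: "nat \<Rightarrow> 'a"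
  assume lay: "is_layout N Ed \<beta> U"
  let ?L = "leaves N Ed"
  have ST: "subcubic_tree N Ed" and bij: "bij_betw \<beta> ?L U" using lay by (auto simp: is_layout_def)
  have inj: "inj_on \<beta> ?L" using bij by (simp add: bij_betw_def)
  define W' where "W' = {x \<in> ?L. \<beta> x \<in> W}"
  have W'L: "W' \<subseteq> ?L" by (simp add: W'_def)
  have W'_img: "\<beta> ` W' = W" using bij W by (auto simp: W'_def bij_betw_def)
  have "3 * k \<le> card W'"
    using km card_image[OF inj_on_subset[OF inj W'L]] W'_img by simp
  then obtain a b where ab: "{a, b} \<in> Ed" and
    split: "k \<le> card (W' \<inter> side N Ed a b)" "k \<le> card (W' - side N Ed a b)"
    using exists_balanced_tree_edge[OF ST W'L \<open>1 \<le> k\<close>] by blast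
  let ?S = "?L \<inter> side N Ed a b"
  let ?X = "\<beta> ` ?S"
  have "W \<inter> ?X = \<beta> ` (W' \<inter> ?S)"
    unfolding W'_img[symmetric] by (rule inj_on_image_Int[OF inj W'L, symmetric]) blast
  also have "W' \<inter> ?S = W' \<inter> side N Ed a b" using W'L by blast
  finally have "card (W \<inter> ?X) = card (W' \<inter> side N Ed a b)"
    using card_image inj_on_subset[OF inj] W'L by (metis Int_lower1 subset_trans)
  moreover have "W - ?X = \<beta> ` (W' - ?S)"
    unfolding W'_img[symmetric] by (rule inj_on_image_set_diff[OF inj, symmetric]) (use W'L in blast)+
  moreover have "W' - ?S = W' - side N Ed a b" using W'L by blast
  moreover have "inj_on \<beta> (W' - side N Ed a b)" using inj_on_subset[OF inj] W'L by blast
  ultimately have "k \<le> card (W \<inter> ?X)" "k \<le> card (W - ?X)" using split by (simp_all add: card_image)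
  moreover have "?X \<subseteq> U" using bij by (auto simp: bij_betw_def)
  ultimately have "k \<le> f ?X" using order by blast
  also have "\<dots> \<le> layout_width f N Ed \<beta>" by (rule layout_width_ge_order[OF lay ab])
  finally show "k \<le> layout_width f N Ed \<beta>" .
qed

section \<open>Vanishing directed branch-width and GF(2) rank bounds\<close>

lemma dbw_eq_0_if_no_2_path:
  assumes "finite E" "E \<noteq> {}" and no_path: "\<And>x y z. (x, y) \<in> E \<Longrightarrow> (y, z) \<notin> E"
  shows "dbw V E = 0"
proof -
  have "SV E Y = {}" if "Y \<subseteq> E" for Y
    using that no_path by (auto simp: SV_def)
  then have "\<forall>X\<subseteq>E. fD E X = 0" by (simp add: fD_def)
  then show ?thesis unfolding dbw_def by (rule layout_f_width_eq_0[OF assms(1,2)])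
qed

lemma gf2_rank_ge_card:
  assumes "finite R" "S \<subseteq> R" "gf2_indep_rows E S C"
  shows "card S \<le> gf2_rank E R C"
proof -
  have "{card S | S. S \<subseteq> R \<and> finite S \<and> gf2_indep_rows E S C} \<subseteq> card ` Pow R" by blast
  then have "finite {card S | S. S \<subseteq> R \<and> finite S \<and> gf2_indep_rows E S C}"
    using assms(1) finite_subset by blast
  then show ?thesis
    unfolding gf2_rank_def using assms finite_subset by (intro Max_ge) auto
qed

lemma gf2_indep_rows_if_private_columns:
  assumes "\<And>r. r \<in> S \<Longrightarrow> \<exists>c\<in>C. \<forall>r'\<in>S. (r', c) \<in> E \<longleftrightarrow> r' = r"
  shows "gf2_indep_rows E S C"
  unfolding gf2_indep_rows_def
proof (intro allI impI)
  fix T assume T: "T \<subseteq> S" "T \<noteq> {}"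
  then obtain r where "r \<in> T" by blast
  then obtain c where "c \<in> C" "\<forall>r'\<in>T. (r', c) \<in> E \<longleftrightarrow> r' = r" using assms T(1) by blast
  then have "{r' \<in> T. (r', c) \<in> E} = {r}" using \<open>r \<in> T\<close> by blast
  then have "odd (card {r' \<in> T. (r', c) \<in> E})" by simp
  then show "\<exists>c\<in>C. odd (card {r' \<in> T. (r', c) \<in> E})" using \<open>c \<in> C\<close> by blast
qed

section \<open>Sources joined to sinks for all pairs\<close>

definition pair_node :: "nat \<Rightarrow> nat \<Rightarrow> nat \<Rightarrow> nat" where
  "pair_node m i j = m + i * m + j"

definition pair_nodes :: "nat \<Rightarrow> nat set" where
  "pair_nodes m = {..<m} \<union> {pair_node m i j | i j. i < m \<and> j < m}"

definition pair_arcs :: "nat \<Rightarrow> (nat \<times> nat) set" where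
  "pair_arcs m = {(i, pair_node m i j) | i j. i < m \<and> j < m} \<union> {(j, pair_node m i j) | i j. i < m \<and> j < m}"

lemma pair_node_inject:
  assumes "j < m" "j' < m"
  shows "pair_node m i j = pair_node m i' j' \<longleftrightarrow> i = i' \<and> j = j'"
proof
  assume eq: "pair_node m i j = pair_node m i' j'"
  then have "j + i * m = j' + i' * m" by (simp add: pair_node_def)
  then have "(j + i * m) mod m = (j' + i' * m) mod m" by (rule arg_cong)
  then have "j = j'" using assms by simp
  then show "i = i' \<and> j = j'" using eq assms by (simp add: pair_node_def)
qed simp

lemma pair_arcs_into_pair_node:
  assumes "i < m" "j < m"
  shows "(r, pair_node m i j) \<in> pair_arcs m \<longleftrightarrow> r = i \<or> r = j"
  using assms pair_node_inject by (auto simp: pair_arcs_def)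

lemma pair_arcsD: "(x, y) \<in> pair_arcs m \<Longrightarrow> x < m \<and> m \<le> y"
  by (auto simp: pair_arcs_def pair_node_def)

lemma finite_pair_nodes: "finite (pair_nodes m)"
proof -
  have "{pair_node m i j | i j. i < m \<and> j < m} = (\<lambda>(i, j). pair_node m i j) ` ({..<m} \<times> {..<m})"
    by auto
  then show ?thesis by (simp add: pair_nodes_def)
qed

lemma pair_arcs_subset: "pair_arcs m \<subseteq> pair_nodes m \<times> pair_nodes m"
  by (auto simp: pair_arcs_def pair_nodes_def)

lemma digraph_pair: "digraph (pair_nodes m) (pair_arcs m)"
  using finite_pair_nodes pair_arcs_subset pair_arcsD by (fastforce simp: digraph_def)

lemma dbw_pair:
  assumes "1 \<le> m"
  shows "dbw (pair_nodes m) (pair_arcs m) = 0"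
proof (rule dbw_eq_0_if_no_2_path)
  show "finite (pair_arcs m)"
    using finite_subset[OF pair_arcs_subset] finite_pair_nodes by blast
  have "(0, pair_node m 0 0) \<in> pair_arcs m" using assms by (auto simp: pair_arcs_def)
  then show "pair_arcs m \<noteq> {}" by blast
  show "(y, z) \<notin> pair_arcs m" if "(x, y) \<in> pair_arcs m" for x y z
    using pair_arcsD[OF that] pair_arcsD[of y z m] by auto
qed

text \<open>Let P and Q be the sources inside and outside X. Either every i \<in> P has a partner
  j \<in> Q with pair_node i j outside X, and these columns make the rows P independent in
  M[X, V - X]; or some i \<in> P has all pair_node i j (j \<in> Q) inside X, and these columns
  make the rows Q independent in M[V - X, X].\<close>

lemma gD_pair_ge:
  assumes P: "k \<le> card ({..<m} \<inter> X)" and Q: "k \<le> card ({..<m} - X)" and X: "X \<subseteq> pair_nodes m"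
  shows "k \<le> gD (pair_nodes m) (pair_arcs m) X"
proof -
  let ?V = "pair_nodes m" and ?E = "pair_arcs m"
  let ?P = "{..<m} \<inter> X" and ?Q = "{..<m} - X"
  have node: "pair_node m i j \<in> ?V" if "i < m" "j < m" for i j
    using that by (auto simp: pair_nodes_def)
  have fin: "finite X" using finite_subset[OF X finite_pair_nodes] .
  show ?thesis
  proof (cases "\<forall>i\<in>?P. \<exists>j\<in>?Q. pair_node m i j \<notin> X")
    case True
    have "gf2_indep_rows ?E ?P (?V - X)"
    proof (rule gf2_indep_rows_if_private_columns)
      fix i assume i: "i \<in> ?P"
      then obtain j where j: "j \<in> ?Q" "pair_node m i j \<notin> X" using True by blast
      then show "\<exists>c\<in>?V - X. \<forall>r\<in>?P. (r, c) \<in> ?E \<longleftrightarrow> r = i"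
        using i node[of i j] by (intro bexI[of _ "pair_node m i j"]) (auto simp: pair_arcs_into_pair_node)
    qed
    then have "card ?P \<le> gf2_rank ?E X (?V - X)" by (intro gf2_rank_ge_card[OF fin]) auto
    then show ?thesis using P by (simp add: gD_def)
  next
    case False
    then obtain i where i: "i \<in> ?P" and inside: "\<forall>j\<in>?Q. pair_node m i j \<in> X" by blast
    have "gf2_indep_rows ?E ?Q X"
    proof (rule gf2_indep_rows_if_private_columns)
      fix j assume j: "j \<in> ?Q"
      then show "\<exists>c\<in>X. \<forall>r\<in>?Q. (r, c) \<in> ?E \<longleftrightarrow> r = j"
        using i inside by (intro bexI[of _ "pair_node m i j"]) (auto simp: pair_arcs_into_pair_node)
    qed
    then have "card ?Q \<le> gf2_rank ?E (?V - X) X"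
      using finite_pair_nodes by (intro gf2_rank_ge_card) (auto simp: pair_nodes_def)
    then show ?thesis using Q by (simp add: gD_def)
  qed
qed

lemma bcrk_pair_ge:
  assumes "1 \<le> k"
  shows "k \<le> bcrk (pair_nodes (3 * k)) (pair_arcs (3 * k))"
  unfolding bcrk_def
proof (rule layout_f_width_ge_if_balanced[OF finite_pair_nodes _ assms])
  show "{..<3 * k} \<subseteq> pair_nodes (3 * k)" by (auto simp: pair_nodes_def)
  show "3 * k \<le> card {..<3 * k}" by simp
  show "k \<le> gD (pair_nodes (3 * k)) (pair_arcs (3 * k)) X"
    if "X \<subseteq> pair_nodes (3 * k)" "k \<le> card ({..<3 * k} \<inter> X)" "k \<le> card ({..<3 * k} - X)" for X
    using gD_pair_ge that by blast
qed

theorem mainTheorem15: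
  shows "\<not> (\<exists>g :: nat \<Rightarrow> nat. \<forall>V E. digraph V E \<longrightarrow> bcrk V E \<le> g (dbw V E))"
proof
  assume "\<exists>g :: nat \<Rightarrow> nat. \<forall>V E. digraph V E \<longrightarrow> bcrk V E \<le> g (dbw V E)"
  then obtain g :: "nat \<Rightarrow> nat" where g: "\<forall>V E. digraph V E \<longrightarrow> bcrk V E \<le> g (dbw V E)"
    by blast
  define k where "k = Suc (g 0)"
  have "1 \<le> k" by (simp add: k_def)
  then have "dbw (pair_nodes (3 * k)) (pair_arcs (3 * k)) = 0" by (intro dbw_pair) simp
  then have "bcrk (pair_nodes (3 * k)) (pair_arcs (3 * k)) \<le> g 0" using g digraph_pair by metis
  moreover have "k \<le> bcrk (pair_nodes (3 * k)) (pair_arcs (3 * k))"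
    using bcrk_pair_ge[OF \<open>1 \<le> k\<close>] .
  ultimately show False by (simp add: k_def)
qed

end
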